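(* Let $G$ be a finite graph with no isolated vertices such that there is no nontrivial circuit injection $f:G_M\rightarrow B$ with $B$ a binary matroid. Then $G$ is 2-connected.
   Context: Graphs are undirected without loops or multiple edges. $G_M$ is the cycle matroid of $G$ (cells: edges; circuits: edge sets of cycles of $G$). A matroid is a pair $(S,\mathscr{C})$, $S\neq\emptyset$, $\mathscr{C}\subseteq 2^S$, satisfying: (I) $A,B\in\mathscr{C}$, $A\subseteq B$ implies $A=B$; (II) $A,B\in\mathscr{C}$, $a\in A\cap B$, $b\in (A\cup B)\setminus(A\cap B)$ implies there exists $D\in\mathscr{C}$ with $D\subseteq A\cup B$, $a\notin D$, $b\in D$. A matroid is binary if the symmetric difference of any two circuits is a union of pairwise disjoint circuits. A circuit injection $f:G_M\rightarrow B$ is a bijection from $E(G)$ onto the cells of $B$ sending each circuit of $G$ to a circuit of $B$; it is nontrivial if $B$ has a circuit not equal to the image of any circuit of $G$. *)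

theory Defs
  imports Main
begin

definition simple_graph :: "'v set \<Rightarrow> 'v set set \<Rightarrow> bool" where
  "simple_graph V E \<longleftrightarrow> finite V \<and> V \<noteq> {} \<and>
     (\<forall>e\<in>E. \<exists>u v. u \<in> V \<and> v \<in> V \<and> u \<noteq> v \<and> e = {u, v})"

definition no_isolated_vertices :: "'v set \<Rightarrow> 'v set set \<Rightarrow> bool" where
  "no_isolated_vertices V E \<longleftrightarrow> (\<forall>v\<in>V. \<exists>e\<in>E. v \<in> e)"

definition cycle_edges :: "'v set \<Rightarrow> 'v set set \<Rightarrow> 'v set set \<Rightarrow> bool" where
  "cycle_edges V E C \<longleftrightarrow> (\<exists>vs. length vs \<ge> 3 \<and> distinct vs \<and> set vs \<subseteq> V \<and>
     (\<forall>i < length vs. {vs ! i, vs ! ((i + 1) mod length vs)} \<in> E) \<and>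
     C = {{vs ! i, vs ! ((i + 1) mod length vs)} | i. i < length vs})"

definition cycle_matroid_circuits :: "'v set \<Rightarrow> 'v set set \<Rightarrow> 'v set set set" where
  "cycle_matroid_circuits V E = {C. cycle_edges V E C}"

definition matroid :: "'c set \<Rightarrow> 'c set set \<Rightarrow> bool" where
  "matroid S Cs \<longleftrightarrow> S \<noteq> {} \<and> Cs \<subseteq> Pow S \<and>
     (\<forall>A\<in>Cs. \<forall>B\<in>Cs. A \<subseteq> B \<longrightarrow> A = B) \<and>
     (\<forall>A\<in>Cs. \<forall>B\<in>Cs. \<forall>a b. a \<in> A \<inter> B \<longrightarrow> b \<in> (A \<union> B) - (A \<inter> B) \<longrightarrow>
        (\<exists>D\<in>Cs. D \<subseteq> A \<union> B \<and> a \<notin> D \<and> b \<in> D))"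

definition binary_matroid :: "'c set \<Rightarrow> 'c set set \<Rightarrow> bool" where
  "binary_matroid S Cs \<longleftrightarrow> matroid S Cs \<and>
     (\<forall>A\<in>Cs. \<forall>B\<in>Cs. \<exists>\<D>. \<D> \<subseteq> Cs \<and>
        (\<forall>X\<in>\<D>. \<forall>Y\<in>\<D>. X \<noteq> Y \<longrightarrow> X \<inter> Y = {}) \<and>
        \<Union>\<D> = (A - B) \<union> (B - A))"

definition circuit_injection ::
  "'v set \<Rightarrow> 'v set set \<Rightarrow> ('v set \<Rightarrow> 'c) \<Rightarrow> 'c set \<Rightarrow> 'c set set \<Rightarrow> bool" where
  "circuit_injection V E f S Cs \<longleftrightarrow> bij_betw f E S \<and>
     (\<forall>C\<in>cycle_matroid_circuits V E. f ` C \<in> Cs)"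

definition nontrivial_circuit_injection ::
  "'v set \<Rightarrow> 'v set set \<Rightarrow> ('v set \<Rightarrow> 'c) \<Rightarrow> 'c set \<Rightarrow> 'c set set \<Rightarrow> bool" where
  "nontrivial_circuit_injection V E f S Cs \<longleftrightarrow> circuit_injection V E f S Cs \<and>
     (\<exists>D\<in>Cs. \<forall>C\<in>cycle_matroid_circuits V E. D \<noteq> f ` C)"

definition graph_connected :: "'v set \<Rightarrow> 'v set set \<Rightarrow> bool" where
  "graph_connected V E \<longleftrightarrow> V \<noteq> {} \<and>
     (\<forall>u\<in>V. \<forall>v\<in>V. (u, v) \<in> {(x, y). x \<in> V \<and> y \<in> V \<and> {x, y} \<in> E}\<^sup>*)"

definition two_connected :: "'v set \<Rightarrow> 'v set set \<Rightarrow> bool" where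
  "two_connected V E \<longleftrightarrow> card V \<ge> 3 \<and> graph_connected V E \<and>
     (\<forall>x\<in>V. graph_connected (V - {x}) {e\<in>E. x \<notin> e})"

end

theory Submission
  imports Defs
begin

(* If G is not 2-connected, it has edges ab and cd such that no cycle passes through both a and c,
   and none through both b and d unless b = d: if G is disconnected, take a and c in different
   components; if x is a cut vertex, take edges ax and cx (so b = d = x) with a and c in different
   components of G - x. The edge sets in which every vertex outside {a, b, c, d} has even degree,
   and a, c as well as b, d have degrees of equal parity, are closed under symmetric difference, so
   their minimal nonempty members are the circuits of a binary matroid on E(G). Every cycle is such
   a minimal member, since a proper nonempty subset of a cycle has two vertices of odd degree on the
   cycle, which the parity conditions rule out. But a nonempty subset of {ab, cd} is a minimal
   member as well and no cycle, so the identity on E(G) is a nontrivial circuit injection into a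
   binary matroid. With fewer than three vertices G has no cycles, and the binary matroid in which
   every edge is a loop serves. *)

definition sym_diff_closed :: "'a set set \<Rightarrow> bool" where
  "sym_diff_closed W \<longleftrightarrow> (\<forall>A\<in>W. \<forall>B\<in>W. sym_diff A B \<in> W)"

lemma sym_diff_closedD: "sym_diff_closed W \<Longrightarrow> A \<in> W \<Longrightarrow> B \<in> W \<Longrightarrow> sym_diff A B \<in> W"
  unfolding sym_diff_closed_def by blast

definition min_nonempty :: "'a set set \<Rightarrow> 'a set set" where
  "min_nonempty W = {C\<in>W. C \<noteq> {} \<and> (\<forall>D\<in>W. D \<subseteq> C \<longrightarrow> D \<noteq> {} \<longrightarrow> D = C)}"

lemma ex_min_nonempty_subset:
  assumes "finite X" "X \<in> W" "X \<noteq> {}"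
  shows "\<exists>D\<in>min_nonempty W. D \<subseteq> X"
  using assms
proof (induction "card X" arbitrary: X rule: less_induct)
  case less
  show ?case
  proof (cases "X \<in> min_nonempty W")
    case True
    then show ?thesis by blast
  next
    case False
    then obtain D where D: "D \<in> W" "D \<noteq> {}" "D \<subset> X"
      using less.prems(2,3) unfolding min_nonempty_def by blast
    have "finite D" using D(3) less.prems(1) by (meson finite_subset psubset_imp_subset)
    moreover have "card D < card X" using D(3) less.prems(1) by (simp add: psubset_card_mono)
    ultimately obtain D' where "D' \<in> min_nonempty W" "D' \<subseteq> D"
      using less.hyps D(1,2) by blast
    then show ?thesis using D(3) by blast
  qed
qed

lemma disjoint_min_nonempty_decomposition:
  assumes "sym_diff_closed W" "finite X" "X \<in> W"
  shows "\<exists>\<D>\<subseteq>min_nonempty W. (\<forall>P\<in>\<D>. \<forall>Q\<in>\<D>. P \<noteq> Q \<longrightarrow> P \<inter> Q = {}) \<and> \<Union>\<D> = X"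
  using assms(2,3)
proof (induction "card X" arbitrary: X rule: less_induct)
  case less
  show ?case
  proof (cases "X = {}")
    case True
    then show ?thesis by (intro exI[of _ "{}"]) simp
  next
    case False
    then obtain D where D: "D \<in> min_nonempty W" "D \<subseteq> X"
      using ex_min_nonempty_subset less.prems by blast
    then have "D \<in> W" "D \<noteq> {}" unfolding min_nonempty_def by auto
    then have "sym_diff X D \<in> W" using sym_diff_closedD[OF assms(1) less.prems(2)] by blast
    moreover have "sym_diff X D = X - D" using D(2) by blast
    ultimately have "X - D \<in> W" by simp
    moreover have "card (X - D) < card X"
      using less.prems(1) D(2) \<open>D \<noteq> {}\<close> by (intro psubset_card_mono) auto
    ultimately obtain \<D> where \<D>: "\<D> \<subseteq> min_nonempty W" "\<forall>P\<in>\<D>. \<forall>Q\<in>\<D>. P \<noteq> Q \<longrightarrow> P \<inter> Q = {}"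
      "\<Union>\<D> = X - D"
      using less.hyps[of "X - D"] less.prems(1) by auto
    have "\<forall>Q\<in>\<D>. D \<inter> Q = {}" using \<D>(3) by blast
    then have "\<forall>P\<in>insert D \<D>. \<forall>Q\<in>insert D \<D>. P \<noteq> Q \<longrightarrow> P \<inter> Q = {}"
      using \<D>(2) by blast
    moreover have "\<Union>(insert D \<D>) = X" using \<D>(3) D(2) by blast
    ultimately show ?thesis using D(1) \<D>(1) by (intro exI[of _ "insert D \<D>"]) simp
  qed
qed

lemma binary_matroid_min_nonempty:
  assumes "finite S" "S \<noteq> {}" "W \<subseteq> Pow S" "sym_diff_closed W"
  shows "binary_matroid S (min_nonempty W)"
proof -
  have decomposition: "\<exists>\<D>\<subseteq>min_nonempty W. (\<forall>P\<in>\<D>. \<forall>Q\<in>\<D>. P \<noteq> Q \<longrightarrow> P \<inter> Q = {}) \<and>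
      \<Union>\<D> = sym_diff A B"
    if "A \<in> min_nonempty W" "B \<in> min_nonempty W" for A B
  proof (rule disjoint_min_nonempty_decomposition[OF assms(4)])
    have "A \<in> W" "B \<in> W" using that unfolding min_nonempty_def by auto
    then show "sym_diff A B \<in> W" by (rule sym_diff_closedD[OF assms(4)])
    have "sym_diff A B \<subseteq> S" using \<open>A \<in> W\<close> \<open>B \<in> W\<close> assms(3) by blast
    then show "finite (sym_diff A B)" using assms(1) by (rule finite_subset)
  qed
  have elimination: "\<exists>D\<in>min_nonempty W. D \<subseteq> A \<union> B \<and> a \<notin> D \<and> b \<in> D"
    if AB: "A \<in> min_nonempty W" "B \<in> min_nonempty W" and "a \<in> A \<inter> B" "b \<in> A \<union> B - A \<inter> B"
    for A B a b
  proof -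
    obtain \<D> where \<D>: "\<D> \<subseteq> min_nonempty W" "\<Union>\<D> = sym_diff A B"
      using decomposition[OF AB] by auto
    have "b \<in> \<Union>\<D>" unfolding \<D>(2) using \<open>b \<in> A \<union> B - A \<inter> B\<close> by blast
    then obtain D where "D \<in> \<D>" "b \<in> D" by (rule UnionE)
    have "D \<subseteq> sym_diff A B" using Union_upper[OF \<open>D \<in> \<D>\<close>] unfolding \<D>(2) .
    then have "D \<subseteq> A \<union> B" "a \<notin> D" using \<open>a \<in> A \<inter> B\<close> by auto
    then show ?thesis using \<D>(1) \<open>D \<in> \<D>\<close> \<open>b \<in> D\<close> by (intro bexI[of _ D]) auto
  qed
  show ?thesis
    unfolding binary_matroid_def matroid_def
  proof (intro conjI ballI allI impI)
    show "min_nonempty W \<subseteq> Pow S" using assms(3) unfolding min_nonempty_def by blast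
    show "A = B" if "A \<in> min_nonempty W" "B \<in> min_nonempty W" "A \<subseteq> B" for A B
      using that unfolding min_nonempty_def by blast
  qed (use assms(2) decomposition elimination in auto)
qed

definition degree :: "'v set set \<Rightarrow> 'v \<Rightarrow> nat" where
  "degree X w = card {e\<in>X. w \<in> e}"

lemma even_degree_sym_diff:
  assumes "finite X" "finite Y"
  shows "even (degree (sym_diff X Y) w) \<longleftrightarrow> (even (degree X w) \<longleftrightarrow> even (degree Y w))"
proof -
  define A B where "A = {e\<in>X. w \<in> e}" and "B = {e\<in>Y. w \<in> e}"
  have "finite A" "finite B" using assms unfolding A_def B_def by auto
  have "{e\<in>sym_diff X Y. w \<in> e} = (A \<union> B) - (A \<inter> B)" unfolding A_def B_def by blast
  moreover have "card ((A \<union> B) - (A \<inter> B)) = card (A \<union> B) - card (A \<inter> B)"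
    using \<open>finite A\<close> by (intro card_Diff_subset) auto
  ultimately have "degree (sym_diff X Y) w = card (A \<union> B) - card (A \<inter> B)"
    unfolding degree_def by simp
  moreover have "card (A \<union> B) + card (A \<inter> B) = card A + card B"
    using \<open>finite A\<close> \<open>finite B\<close> by (rule card_Un_Int[symmetric])
  moreover have "card (A \<inter> B) \<le> card A" using \<open>finite A\<close> by (simp add: card_mono)
  moreover have "card (A \<inter> B) \<le> card B" using \<open>finite B\<close> by (simp add: card_mono)
  moreover have "degree X w = card A" "degree Y w = card B" unfolding degree_def A_def B_def by simp_all
  ultimately have "degree (sym_diff X Y) w + 2 * card (A \<inter> B) = degree X w + degree Y w"
    by linarith
  then show ?thesis by (metis even_add even_mult_iff even_numeral)
qed

definition cycle_edge :: "'v list \<Rightarrow> nat \<Rightarrow> 'v set" where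
  "cycle_edge vs i = {vs ! i, vs ! ((i + 1) mod length vs)}"

definition cycle_list :: "'v set \<Rightarrow> 'v set set \<Rightarrow> 'v list \<Rightarrow> bool" where
  "cycle_list V E vs \<longleftrightarrow> 3 \<le> length vs \<and> distinct vs \<and> set vs \<subseteq> V \<and>
     (\<forall>i<length vs. cycle_edge vs i \<in> E)"

lemma cycle_edges_iff:
  "cycle_edges V E C \<longleftrightarrow> (\<exists>vs. cycle_list V E vs \<and> C = cycle_edge vs ` {..<length vs})"
  unfolding cycle_edges_def cycle_list_def cycle_edge_def by (auto simp: image_def)

lemma Suc_mod_if: "i < n \<Longrightarrow> Suc i mod n = (if Suc i = n then 0 else Suc i)"
  for i n :: nat
  by simp

lemma Suc_mod_less: "i < n \<Longrightarrow> Suc i mod n < n"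
  for i n :: nat
  by (cases n) auto

lemma pred_mod_if: "k < n \<Longrightarrow> (k + n - Suc 0) mod n = (if k = 0 then n - 1 else k - 1)"
  for k n :: nat
  by (cases k) (auto simp: mod_if)

lemma succ_mod_eq_iff: "k < n \<Longrightarrow> i < n \<Longrightarrow> (i + 1) mod n = k \<longleftrightarrow> i = (k + n - 1) mod n"
  for i k n :: nat
  by (auto simp: Suc_mod_if pred_mod_if)

lemma mem_cycle_edge:
  assumes "distinct vs" "k < length vs" "i < length vs"
  shows "vs ! k \<in> cycle_edge vs i \<longleftrightarrow> k = i \<or> k = (i + 1) mod length vs"
  using assms Suc_mod_less[OF assms(3)] by (auto simp: cycle_edge_def nth_eq_iff_index_eq)

lemma inj_on_cycle_edge:
  assumes "distinct vs" "3 \<le> length vs"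
  shows "inj_on (cycle_edge vs) {..<length vs}"
proof (rule inj_onI)
  fix i j assume "i \<in> {..<length vs}" "j \<in> {..<length vs}" and eq: "cycle_edge vs i = cycle_edge vs j"
  then have "i < length vs" "j < length vs" by auto
  moreover have "vs ! i \<in> cycle_edge vs j" "vs ! j \<in> cycle_edge vs i"
    using eq unfolding cycle_edge_def by auto
  ultimately show "i = j" using assms by (auto simp: mem_cycle_edge Suc_mod_if split: if_splits)
qed

lemma card_cycle_edges:
  assumes "cycle_edges V E C"
  shows "3 \<le> card C"
proof -
  obtain vs where "cycle_list V E vs" "C = cycle_edge vs ` {..<length vs}"
    using assms unfolding cycle_edges_iff by blast
  then show ?thesis
    using inj_on_cycle_edge[of vs] by (auto simp: cycle_list_def card_image)
qed

lemma degree_image: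
  assumes "inj_on f A" "B \<subseteq> A"
  shows "degree (f ` B) w = card {i\<in>B. w \<in> f i}"
proof -
  have "{e\<in>f ` B. w \<in> e} = f ` {i\<in>B. w \<in> f i}" by blast
  moreover have "inj_on f {i\<in>B. w \<in> f i}" using assms by (auto intro: inj_on_subset)
  ultimately show ?thesis unfolding degree_def by (simp add: card_image)
qed

lemma degree_cycle_edge_image:
  assumes "distinct vs" "3 \<le> length vs" "I \<subseteq> {..<length vs}" "k < length vs"
  shows "degree (cycle_edge vs ` I) (vs ! k) = card (I \<inter> {k, (k + length vs - 1) mod length vs})"
proof -
  have "vs ! k \<in> cycle_edge vs i \<longleftrightarrow> i = k \<or> i = (k + length vs - 1) mod length vs"
    if "i < length vs" for i
    using mem_cycle_edge[OF assms(1,4) that] succ_mod_eq_iff[OF assms(4) that] by auto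
  then have "{i\<in>I. vs ! k \<in> cycle_edge vs i} = I \<inter> {k, (k + length vs - 1) mod length vs}"
    using assms(3) by auto
  then show ?thesis using degree_image[OF inj_on_cycle_edge[OF assms(1,2)] assms(3)] by simp
qed

lemma degree_outside_cycle:
  assumes "D \<subseteq> cycle_edge vs ` {..<length vs}" "w \<notin> set vs"
  shows "degree D w = 0"
proof -
  have "(i + 1) mod length vs < length vs" if "i < length vs" for i
    using Suc_mod_less[OF that] by simp
  then have "{e\<in>D. w \<in> e} = {}"
    using assms by (auto simp: cycle_edge_def dest: nth_mem)
  then show ?thesis unfolding degree_def by (simp only: card.empty)
qed

lemma even_degree_cycle:
  assumes "distinct vs" "3 \<le> length vs"
  shows "even (degree (cycle_edge vs ` {..<length vs}) w)"
proof (cases "w \<in> set vs")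
  case True
  then obtain k where k: "k < length vs" "w = vs ! k" by (metis in_set_conv_nth)
  then have "{..<length vs} \<inter> {k, (k + length vs - 1) mod length vs} = {k, (k + length vs - 1) mod length vs}"
    using assms(2) by (auto simp: pred_mod_if)
  moreover have "(k + length vs - 1) mod length vs \<noteq> k" using k(1) assms(2) by (auto simp: pred_mod_if)
  ultimately show ?thesis using degree_cycle_edge_image[OF assms _ k(1)] k(2) by simp
qed (simp add: degree_outside_cycle[OF subset_refl])

lemma ex_mod_succ_notin:
  fixes n :: nat
  assumes "I \<subseteq> {..<n}" "I \<noteq> {}" "\<not> {..<n} \<subseteq> I"
  shows "\<exists>i\<in>I. (i + 1) mod n \<notin> I"
proof (rule ccontr)
  assume "\<not> ?thesis"
  then have closed: "(i + 1) mod n \<in> I" if "i \<in> I" for i using that by blast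
  obtain i0 where "i0 \<in> I" using assms(2) by blast
  have "(i0 + m) mod n \<in> I" for m
  proof (induction m)
    case 0
    then show ?case using \<open>i0 \<in> I\<close> assms(1) by auto
  next
    case (Suc m)
    then show ?case using closed[OF Suc] by (simp add: mod_Suc_eq)
  qed
  moreover have "(i0 + (n - i0 + j)) mod n = j" if "j < n" for j
    using that \<open>i0 \<in> I\<close> assms(1) by auto
  ultimately have "{..<n} \<subseteq> I" by (metis lessThan_iff subsetI)
  then show False using assms(3) by blast
qed

lemma two_odd_vertices_of_proper_subset:
  assumes "distinct vs" "3 \<le> length vs" "Y \<subseteq> cycle_edge vs ` {..<length vs}"
    "Y \<noteq> {}" "Y \<noteq> cycle_edge vs ` {..<length vs}"
  obtains p q where "p \<in> set vs" "q \<in> set vs" "p \<noteq> q" "odd (degree Y p)" "odd (degree Y q)"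
proof -
  let ?n = "length vs"
  define I where "I = {i\<in>{..<?n}. cycle_edge vs i \<in> Y}"
  have Y: "Y = cycle_edge vs ` I" using assms(3) unfolding I_def by auto
  have "I \<subseteq> {..<?n}" unfolding I_def by blast
  moreover have "I \<noteq> {}" using Y assms(4) by blast
  moreover have "\<not> {..<?n} \<subseteq> I" using Y assms(5) \<open>I \<subseteq> {..<?n}\<close> by (metis subset_antisym)
  ultimately have I: "I \<subseteq> {..<?n}" "I \<noteq> {}" "\<not> {..<?n} \<subseteq> I" by blast+
  obtain i where i: "i \<in> I" "(i + 1) mod ?n \<notin> I" using ex_mod_succ_notin[OF I] by blast
  obtain j where j: "j \<in> {..<?n} - I" "(j + 1) mod ?n \<notin> {..<?n} - I"
    using ex_mod_succ_notin[of "{..<?n} - I" ?n] I by blast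
  define k k' where "k = (i + 1) mod ?n" and "k' = (j + 1) mod ?n"
  have "0 < ?n" using assms(2) by linarith
  then have "k < ?n" "k' < ?n" "i < ?n" "j < ?n" using i j I(1) unfolding k_def k'_def by auto
  then have "(k + ?n - 1) mod ?n = i" "(k' + ?n - 1) mod ?n = j"
    unfolding k_def k'_def using succ_mod_eq_iff by metis+
  then have "I \<inter> {k, (k + ?n - 1) mod ?n} = {i}" "I \<inter> {k', (k' + ?n - 1) mod ?n} = {k'}"
    using i j \<open>k' < ?n\<close> unfolding k_def k'_def by auto
  then have "degree Y (vs ! k) = 1" "degree Y (vs ! k') = 1"
    using degree_cycle_edge_image[OF assms(1,2) I(1)] \<open>k < ?n\<close> \<open>k' < ?n\<close> Y by simp_all
  moreover have "vs ! k \<noteq> vs ! k'"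
    using i j assms(1) \<open>k < ?n\<close> \<open>k' < ?n\<close> unfolding k_def k'_def by (auto simp: nth_eq_iff_index_eq)
  ultimately show ?thesis using that[of "vs ! k" "vs ! k'"] \<open>k < ?n\<close> \<open>k' < ?n\<close> by simp
qed

definition adj :: "'v set \<Rightarrow> 'v set set \<Rightarrow> ('v \<times> 'v) set" where
  "adj V E = {(x, y). x \<in> V \<and> y \<in> V \<and> {x, y} \<in> E}"

lemma graph_connected_iff_adj:
  "graph_connected V E \<longleftrightarrow> V \<noteq> {} \<and> (\<forall>u\<in>V. \<forall>v\<in>V. (u, v) \<in> (adj V E)\<^sup>*)"
  unfolding graph_connected_def adj_def by (rule refl)

lemma sym_adj: "sym (adj V E)"
  unfolding sym_def adj_def by (auto simp: insert_commute)

lemma rtrancl_adj_sym: "(p, q) \<in> (adj V E)\<^sup>* \<Longrightarrow> (q, p) \<in> (adj V E)\<^sup>*"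
  using sym_rtrancl[OF sym_adj] by (rule symD)

lemma adj_mono: "V' \<subseteq> V \<Longrightarrow> E' \<subseteq> E \<Longrightarrow> adj V' E' \<subseteq> adj V E"
  unfolding adj_def by blast

lemma rtrancl_adj_in_vertices: "(u, w) \<in> (adj V E)\<^sup>* \<Longrightarrow> w = u \<or> w \<in> V"
  by (erule rtranclE) (auto simp: adj_def)

lemma rtrancl_crossing_step:
  assumes "(p, q) \<in> R\<^sup>*" "P p" "\<not> P q"
  shows "\<exists>s t. (s, t) \<in> R \<and> P s \<and> \<not> P t"
  using assms by (induction rule: rtrancl_induct) auto

lemma rtrancl_path:
  assumes "i \<le> j" "\<And>t. i \<le> t \<Longrightarrow> t < j \<Longrightarrow> (f t, f (Suc t)) \<in> R"
  shows "(f i, f j) \<in> R\<^sup>*"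
  using assms by (induction rule: dec_induct) (auto intro: rtrancl_into_rtrancl)

lemma cycle_step_avoiding:
  assumes "cycle_list V E vs" "i < length vs"
    "vs ! i \<noteq> x" "vs ! ((i + 1) mod length vs) \<noteq> x"
  shows "(vs ! i, vs ! ((i + 1) mod length vs)) \<in> adj (V - {x}) {e\<in>E. x \<notin> e}"
proof -
  have "(i + 1) mod length vs < length vs" using Suc_mod_less[OF assms(2)] by simp
  then have "vs ! i \<in> V" "vs ! ((i + 1) mod length vs) \<in> V"
    using assms(1,2) nth_mem unfolding cycle_list_def by blast+
  moreover have "cycle_edge vs i \<in> E" using assms(1,2) unfolding cycle_list_def by blast
  ultimately show ?thesis using assms(3,4) unfolding adj_def cycle_edge_def by auto
qed

lemma cycle_segment_avoiding:
  assumes "cycle_list V E vs" "i \<le> j" "j < length vs" "\<And>t. i \<le> t \<Longrightarrow> t \<le> j \<Longrightarrow> vs ! t \<noteq> x"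
  shows "(vs ! i, vs ! j) \<in> (adj (V - {x}) {e\<in>E. x \<notin> e})\<^sup>*"
proof (rule rtrancl_path[OF assms(2)])
  fix t assume "i \<le> t" "t < j"
  then have "(t + 1) mod length vs = Suc t" using assms(3) by simp
  then show "(vs ! t, vs ! Suc t) \<in> adj (V - {x}) {e\<in>E. x \<notin> e}"
    using cycle_step_avoiding[OF assms(1), of t x] assms(3,4) \<open>i \<le> t\<close> \<open>t < j\<close> by simp
qed

lemma cycle_connected_avoiding:
  assumes "cycle_list V E vs" "p \<in> set vs" "q \<in> set vs" "p \<noteq> x" "q \<noteq> x"
  shows "(p, q) \<in> (adj (V - {x}) {e\<in>E. x \<notin> e})\<^sup>*"
proof -
  let ?n = "length vs" and ?R = "adj (V - {x}) {e\<in>E. x \<notin> e}"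
  have ordered: "(vs ! i, vs ! j) \<in> ?R\<^sup>*"
    if ij: "i \<le> j" "j < ?n" "vs ! i \<noteq> x" "vs ! j \<noteq> x" for i j
  proof (cases "\<exists>k. i \<le> k \<and> k \<le> j \<and> vs ! k = x")
    case False
    then show ?thesis using cycle_segment_avoiding[OF assms(1) ij(1,2)] by blast
  next
    case True
    \<comment> \<open>go the other way round the cycle, through the edge from the last vertex to the first\<close>
    then obtain k where k: "i < k" "k < j" "vs ! k = x" using ij by (metis le_eq_less_or_eq)
    have "k < ?n" using k(2) ij(2) by linarith
    have only_k: "vs ! t \<noteq> x" if "t < ?n" "t \<noteq> k" for t
      using that k(3) \<open>k < ?n\<close> assms(1) unfolding cycle_list_def by (metis nth_eq_iff_index_eq)
    have "(vs ! 0, vs ! i) \<in> ?R\<^sup>*"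
      using cycle_segment_avoiding[OF assms(1), of 0 i] only_k k \<open>j < ?n\<close> by simp
    moreover have "(vs ! (?n - 1), vs ! 0) \<in> ?R"
    proof -
      have "?n - 1 + 1 = ?n" using ij(2) by linarith
      then have "(?n - 1 + 1) mod ?n = 0" by simp
      moreover have "vs ! (?n - 1) \<noteq> x" "vs ! 0 \<noteq> x"
        by (rule only_k; use k ij(2) in linarith)+
      ultimately show ?thesis using cycle_step_avoiding[OF assms(1), of "?n - 1" x] ij(2) by simp
    qed
    moreover have "(vs ! j, vs ! (?n - 1)) \<in> ?R\<^sup>*"
      using cycle_segment_avoiding[OF assms(1), of j "?n - 1"] only_k k \<open>j < ?n\<close> by simp
    ultimately show ?thesis
      by (meson rtrancl_adj_sym r_into_rtrancl rtrancl_trans)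
  qed
  obtain i j where "i < ?n" "j < ?n" "p = vs ! i" "q = vs ! j"
    using assms(2,3) by (metis in_set_conv_nth)
  then show ?thesis
    using ordered[of i j] ordered[of j i] assms(4,5) rtrancl_adj_sym by (cases "i \<le> j") auto
qed

lemma cycle_connected:
  assumes "cycle_list V E vs" "p \<in> set vs" "q \<in> set vs"
  shows "(p, q) \<in> (adj V E)\<^sup>*"
proof -
  have "card (set vs) \<ge> 3" using assms(1) unfolding cycle_list_def by (simp add: distinct_card)
  then obtain x where "x \<in> set vs" "x \<noteq> p" "x \<noteq> q"
    by (metis card_le_Suc_iff numeral_3_eq_3 insert_iff)
  then have "(p, q) \<in> (adj (V - {x}) {e\<in>E. x \<notin> e})\<^sup>*"
    using cycle_connected_avoiding[OF assms] by auto
  moreover have "adj (V - {x}) {e\<in>E. x \<notin> e} \<subseteq> adj V E" by (rule adj_mono) auto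
  ultimately show ?thesis using rtrancl_mono by blast
qed

definition parity_space :: "'v set \<Rightarrow> 'v set set \<Rightarrow> 'v \<Rightarrow> 'v \<Rightarrow> 'v \<Rightarrow> 'v \<Rightarrow> 'v set set set" where
  "parity_space V E a b c d = {X. X \<subseteq> E \<and> (\<forall>w\<in>V - {a, b, c, d}. even (degree X w)) \<and>
     (even (degree X a) \<longleftrightarrow> even (degree X c)) \<and> (even (degree X b) \<longleftrightarrow> even (degree X d))}"

lemma sym_diff_closed_parity_space:
  assumes "finite E"
  shows "sym_diff_closed (parity_space V E a b c d)"
  unfolding sym_diff_closed_def
proof (intro ballI)
  fix A B assume A: "A \<in> parity_space V E a b c d" and B: "B \<in> parity_space V E a b c d"
  then have "A \<subseteq> E" "B \<subseteq> E" unfolding parity_space_def by auto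
  then have "finite A" "finite B" using assms finite_subset by auto
  then have "even (degree (sym_diff A B) w) \<longleftrightarrow> (even (degree A w) \<longleftrightarrow> even (degree B w))" for w
    by (rule even_degree_sym_diff)
  then show "sym_diff A B \<in> parity_space V E a b c d"
    using A B unfolding parity_space_def by auto
qed

lemma proper_subset_of_cycle_notin_parity_space:
  assumes vs: "cycle_list V E vs"
    and ac: "\<not> (a \<in> set vs \<and> c \<in> set vs)" and bd: "b \<noteq> d \<longrightarrow> \<not> (b \<in> set vs \<and> d \<in> set vs)"
    and D: "D \<subseteq> cycle_edge vs ` {..<length vs}" "D \<noteq> {}" "D \<noteq> cycle_edge vs ` {..<length vs}"
  shows "D \<notin> parity_space V E a b c d"
proof
  assume "D \<in> parity_space V E a b c d"
  then have parity: "\<forall>w\<in>V - {a, b, c, d}. even (degree D w)"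
    "even (degree D a) \<longleftrightarrow> even (degree D c)" "even (degree D b) \<longleftrightarrow> even (degree D d)"
    unfolding parity_space_def by auto
  have "distinct vs" "3 \<le> length vs" using vs unfolding cycle_list_def by auto
  then obtain p q
    where pq: "p \<in> set vs" "q \<in> set vs" "p \<noteq> q" "odd (degree D p)" "odd (degree D q)"
    by (rule two_odd_vertices_of_proper_subset[OF _ _ D])
  have on_cycle: "w \<in> set vs" if "odd (degree D w)" for w
    using that degree_outside_cycle[OF D(1)] by fastforce
  have "even (degree D a)"
  proof (rule ccontr)
    assume "odd (degree D a)"
    moreover have "odd (degree D c)" using calculation parity(2) by simp
    ultimately show False using on_cycle ac by blast
  qed
  then have "even (degree D c)" using parity(2) by simp
  have bd_even: "even (degree D b)" if "b \<noteq> d"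
  proof (rule ccontr)
    assume "odd (degree D b)"
    moreover have "odd (degree D d)" using calculation parity(3) by simp
    ultimately show False using on_cycle bd that by blast
  qed
  have only_b: "w = b \<and> b = d" if "w \<in> set vs" "odd (degree D w)" for w
  proof -
    have "w \<in> V" using that(1) vs unfolding cycle_list_def by auto
    then have "w \<in> {a, b, c, d}" using parity(1) that(2) by blast
    then have "w = b \<or> w = d"
      using that(2) \<open>even (degree D a)\<close> \<open>even (degree D c)\<close> by auto
    moreover have "b = d" using bd_even parity(3) that(2) calculation by auto
    ultimately show ?thesis by auto
  qed
  show False using only_b[OF pq(1,4)] only_b[OF pq(2,5)] pq(3) by simp
qed

lemma cycle_in_min_nonempty_parity_space:
  assumes vs: "cycle_list V E vs"
    and "\<not> (a \<in> set vs \<and> c \<in> set vs)" "b \<noteq> d \<longrightarrow> \<not> (b \<in> set vs \<and> d \<in> set vs)"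
  shows "cycle_edge vs ` {..<length vs} \<in> min_nonempty (parity_space V E a b c d)"
proof -
  let ?C = "cycle_edge vs ` {..<length vs}"
  have "distinct vs" "3 \<le> length vs" "?C \<subseteq> E" using vs unfolding cycle_list_def by auto
  then have "?C \<in> parity_space V E a b c d"
    unfolding parity_space_def using even_degree_cycle[of vs] by simp
  moreover have "?C \<noteq> {}"
    using \<open>3 \<le> length vs\<close> by (metis image_is_empty lessThan_empty_iff not_numeral_le_zero)
  ultimately show ?thesis
    using proper_subset_of_cycle_notin_parity_space[OF assms] unfolding min_nonempty_def by blast
qed

lemma degree_pair:
  assumes "P \<noteq> Q"
  shows "degree {P, Q} w = (if w \<in> P then 1 else 0) + (if w \<in> Q then 1 else 0)"
proof -
  have "{e\<in>{P, Q}. w \<in> e} = (if w \<in> P then {P} else {}) \<union> (if w \<in> Q then {Q} else {})" by auto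
  then show ?thesis unfolding degree_def using assms by simp
qed

lemma pair_in_parity_space:
  assumes "{a, b} \<in> E" "{c, d} \<in> E" "a \<notin> {b, c, d}" "c \<notin> {b, d}"
  shows "{{a, b}, {c, d}} \<in> parity_space V E a b c d"
proof -
  let ?X = "{{a, b}, {c, d}}"
  have "{a, b} \<noteq> {c, d}" using assms(3) by auto
  then have deg: "degree ?X w = (if w \<in> {a, b} then 1 else 0) + (if w \<in> {c, d} then 1 else 0)" for w
    by (rule degree_pair)
  have "degree ?X a = 1" "degree ?X c = 1" using assms(3,4) deg by auto
  moreover have "degree ?X b = 1 \<and> degree ?X d = 1" if "b \<noteq> d" using that assms(3,4) deg by auto
  moreover have "degree ?X w = 0" if "w \<notin> {a, b, c, d}" for w using that deg by auto
  ultimately show ?thesis using assms(1,2) unfolding parity_space_def by force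
qed

definition binary_extension :: "'v set \<Rightarrow> 'v set set \<Rightarrow> 'v set set set \<Rightarrow> bool" where
  "binary_extension V E W \<longleftrightarrow>
     W \<subseteq> Pow E \<and> sym_diff_closed W \<and> cycle_matroid_circuits V E \<subset> min_nonempty W"

lemma binary_extensionI:
  assumes "W \<subseteq> Pow E" "sym_diff_closed W" "cycle_matroid_circuits V E \<subseteq> min_nonempty W"
    and "X \<in> W" "finite X" "X \<noteq> {}" "card X \<le> 2"
  shows "binary_extension V E W"
proof -
  obtain D where "D \<in> min_nonempty W" "D \<subseteq> X" using ex_min_nonempty_subset assms(4-6) by blast
  moreover have "card D \<le> 2" using \<open>D \<subseteq> X\<close> assms(5,7) by (meson card_mono order_trans)
  then have "D \<notin> cycle_matroid_circuits V E"
    using card_cycle_edges unfolding cycle_matroid_circuits_def by fastforce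
  ultimately show ?thesis using assms(1-3) unfolding binary_extension_def by blast
qed

lemma binary_extension_parity_space:
  assumes "finite E" "{a, b} \<in> E" "{c, d} \<in> E" "a \<notin> {b, c, d}" "c \<notin> {b, d}"
    and separated: "\<And>vs. cycle_list V E vs \<Longrightarrow>
      \<not> (a \<in> set vs \<and> c \<in> set vs) \<and> (b \<noteq> d \<longrightarrow> \<not> (b \<in> set vs \<and> d \<in> set vs))"
  shows "binary_extension V E (parity_space V E a b c d)"
proof (rule binary_extensionI)
  show "parity_space V E a b c d \<subseteq> Pow E" unfolding parity_space_def by blast
  show "sym_diff_closed (parity_space V E a b c d)" using assms(1) by (rule sym_diff_closed_parity_space)
  show "cycle_matroid_circuits V E \<subseteq> min_nonempty (parity_space V E a b c d)"
  proof
    fix C assume "C \<in> cycle_matroid_circuits V E"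
    then obtain vs where vs: "cycle_list V E vs" "C = cycle_edge vs ` {..<length vs}"
      unfolding cycle_matroid_circuits_def cycle_edges_iff by blast
    then show "C \<in> min_nonempty (parity_space V E a b c d)"
      using cycle_in_min_nonempty_parity_space[OF vs(1)] separated[OF vs(1)] by simp
  qed
  show "{{a, b}, {c, d}} \<in> parity_space V E a b c d" using assms(2-5) by (rule pair_in_parity_space)
  show "card {{a, b}, {c, d}} \<le> 2" by (simp add: card_insert_le_m1)
qed simp_all

lemma binary_extension_Pow:
  assumes "finite V" "card V < 3" "e \<in> E"
  shows "binary_extension V E (Pow E)"
proof (rule binary_extensionI)
  show "sym_diff_closed (Pow E)" unfolding sym_diff_closed_def by blast
  have "\<not> cycle_list V E vs" for vs
  proof
    assume "cycle_list V E vs"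
    then have "3 \<le> card (set vs)" "set vs \<subseteq> V" unfolding cycle_list_def by (auto simp: distinct_card)
    moreover have "card (set vs) \<le> card V" if "set vs \<subseteq> V" using card_mono[OF assms(1) that] .
    ultimately show False using assms(2) by linarith
  qed
  then have "cycle_matroid_circuits V E = {}"
    unfolding cycle_matroid_circuits_def cycle_edges_iff by blast
  then show "cycle_matroid_circuits V E \<subseteq> min_nonempty (Pow E)" by (rule ssubst) (rule empty_subsetI)
  show "{e} \<in> Pow E" using assms(3) by simp
qed simp_all

lemma circuit_injection_of_binary_extension:
  assumes "finite E" "E \<noteq> {}" "binary_extension V E W"
  shows "binary_matroid E (min_nonempty W) \<and> nontrivial_circuit_injection V E id E (min_nonempty W)"
proof
  have W: "W \<subseteq> Pow E" "sym_diff_closed W" "cycle_matroid_circuits V E \<subset> min_nonempty W"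
    using assms(3) unfolding binary_extension_def by blast+
  show "binary_matroid E (min_nonempty W)" using binary_matroid_min_nonempty[OF assms(1,2) W(1,2)] .
  obtain D where "D \<in> min_nonempty W" "D \<notin> cycle_matroid_circuits V E" using W(3) by blast
  then show "nontrivial_circuit_injection V E id E (min_nonempty W)"
    using W(3) unfolding nontrivial_circuit_injection_def circuit_injection_def by auto
qed

lemma simple_graph_finite_edges:
  assumes "simple_graph V E"
  shows "finite E"
proof -
  have "e \<in> Pow V" if "e \<in> E" for e
    using assms that unfolding simple_graph_def by fastforce
  then have "E \<subseteq> Pow V" by blast
  moreover have "finite (Pow V)" using assms unfolding simple_graph_def by simp
  ultimately show ?thesis by (rule finite_subset)
qed

lemma ex_neighbour:
  assumes "simple_graph V E" "no_isolated_vertices V E" "u \<in> V"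
  obtains w where "w \<in> V" "w \<noteq> u" "{u, w} \<in> E"
proof -
  obtain e where e: "e \<in> E" "u \<in> e" using assms(2,3) unfolding no_isolated_vertices_def by blast
  then obtain p q where pq: "p \<in> V" "q \<in> V" "p \<noteq> q" "e = {p, q}"
    using assms(1) unfolding simple_graph_def by blast
  then have "u = p \<or> u = q" using e(2) by blast
  then show ?thesis
  proof
    assume "u = p"
    then show ?thesis using that[of q] pq e(1) by simp
  next
    assume "u = q"
    then have "{u, p} = e" using pq(4) by blast
    then show ?thesis using that[of p] pq e(1) \<open>u = q\<close> by simp
  qed
qed

lemma ex_neighbour_in_closed_set:
  assumes "(u, x) \<in> (adj V E)\<^sup>*" "u \<in> K" "x \<notin> K"
    and closed: "\<And>s t. (s, t) \<in> adj V E \<Longrightarrow> s \<in> K \<Longrightarrow> t \<noteq> x \<Longrightarrow> t \<in> K"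
  obtains s where "s \<in> K" "(s, x) \<in> adj V E"
proof -
  obtain s t where "(s, t) \<in> adj V E" "s \<in> K" "t \<notin> K"
    using rtrancl_crossing_step[OF assms(1), of "\<lambda>w. w \<in> K"] assms(2,3) by blast
  moreover have "t = x" using calculation closed by blast
  ultimately show ?thesis using that by blast
qed

lemma binary_extension_if_disconnected:
  assumes sg: "simple_graph V E" and ni: "no_isolated_vertices V E" and "\<not> graph_connected V E"
  shows "\<exists>W. binary_extension V E W"
proof -
  let ?R = "adj V E"
  have "V \<noteq> {}" using sg unfolding simple_graph_def by blast
  then obtain u v where "u \<in> V" "v \<in> V" and not_uv: "(u, v) \<notin> ?R\<^sup>*"
    using assms(3) unfolding graph_connected_iff_adj by blast
  obtain b where b: "b \<in> V" "b \<noteq> u" "{u, b} \<in> E" using ex_neighbour[OF sg ni \<open>u \<in> V\<close>] .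
  obtain d where d: "d \<in> V" "d \<noteq> v" "{v, d} \<in> E" using ex_neighbour[OF sg ni \<open>v \<in> V\<close>] .
  have "(u, b) \<in> ?R" "(v, d) \<in> ?R" using b d \<open>u \<in> V\<close> \<open>v \<in> V\<close> unfolding adj_def by auto
  then have ub: "(u, b) \<in> ?R\<^sup>*" and dv: "(d, v) \<in> ?R\<^sup>*"
    by (simp_all add: r_into_rtrancl rtrancl_adj_sym)
  have not_ud: "(u, d) \<notin> ?R\<^sup>*" using not_uv dv by (meson rtrancl_trans)
  have not_bd: "(b, d) \<notin> ?R\<^sup>*" using not_ud ub by (meson rtrancl_trans)
  have "binary_extension V E (parity_space V E u b v d)"
  proof (rule binary_extension_parity_space)
    show "finite E" using sg by (rule simple_graph_finite_edges)
    show "{u, b} \<in> E" "{v, d} \<in> E" using b d by simp_all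
    show "u \<notin> {b, v, d}" using b not_uv not_ud by auto
    show "v \<notin> {b, d}" using d not_uv ub by auto
    fix vs assume vs: "cycle_list V E vs"
    show "\<not> (u \<in> set vs \<and> v \<in> set vs) \<and> (b \<noteq> d \<longrightarrow> \<not> (b \<in> set vs \<and> d \<in> set vs))"
      using cycle_connected[OF vs, of u v] cycle_connected[OF vs, of b d] not_uv not_bd by blast
  qed
  then show ?thesis by blast
qed

lemma ex_neighbour_reachable_avoiding:
  assumes conn: "graph_connected V E" and "x \<in> V" and u: "u \<in> V - {x}"
  obtains s where "(u, s) \<in> (adj (V - {x}) {e\<in>E. x \<notin> e})\<^sup>*" "(s, x) \<in> adj V E" "s \<noteq> x"
proof -
  let ?R = "adj V E" and ?Rx = "adj (V - {x}) {e\<in>E. x \<notin> e}"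
  define K where "K = {w. (u, w) \<in> ?Rx\<^sup>*}"
  have "u \<in> K" unfolding K_def by simp
  have "x \<notin> K" using u rtrancl_adj_in_vertices unfolding K_def by fastforce
  have K_closed: "t \<in> K" if st: "(s, t) \<in> ?R" "s \<in> K" "t \<noteq> x" for s t
  proof -
    have "s \<noteq> x" using st(2) \<open>x \<notin> K\<close> by blast
    then have "(s, t) \<in> ?Rx" using st(1,3) unfolding adj_def by auto
    then show ?thesis using rtrancl_into_rtrancl[of u s ?Rx t] st(2) unfolding K_def by simp
  qed
  have "(u, x) \<in> ?R\<^sup>*" using conn u \<open>x \<in> V\<close> unfolding graph_connected_iff_adj by blast
  then obtain s where "s \<in> K" "(s, x) \<in> ?R"
    using ex_neighbour_in_closed_set[OF _ \<open>u \<in> K\<close> \<open>x \<notin> K\<close>] K_closed by blast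
  moreover have "s \<noteq> x" using \<open>s \<in> K\<close> \<open>x \<notin> K\<close> by blast
  ultimately show ?thesis using that unfolding K_def by blast
qed

lemma neighbours_of_cut_vertex:
  assumes "graph_connected V E" "x \<in> V" "V \<noteq> {x}"
    and "\<not> graph_connected (V - {x}) {e\<in>E. x \<notin> e}"
  obtains s s' where "(s, x) \<in> adj V E" "(s', x) \<in> adj V E" "s \<noteq> x" "s' \<noteq> x"
    "(s, s') \<notin> (adj (V - {x}) {e\<in>E. x \<notin> e})\<^sup>*"
proof -
  let ?Rx = "adj (V - {x}) {e\<in>E. x \<notin> e}"
  have "V - {x} \<noteq> {}" using \<open>x \<in> V\<close> \<open>V \<noteq> {x}\<close> by blast
  then obtain u v where "u \<in> V - {x}" "v \<in> V - {x}" and not_uv: "(u, v) \<notin> ?Rx\<^sup>*"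
    using assms(4) unfolding graph_connected_iff_adj by blast
  obtain s where s: "(u, s) \<in> ?Rx\<^sup>*" "(s, x) \<in> adj V E" "s \<noteq> x"
    using ex_neighbour_reachable_avoiding[OF assms(1,2) \<open>u \<in> V - {x}\<close>] by blast
  obtain s' where s': "(v, s') \<in> ?Rx\<^sup>*" "(s', x) \<in> adj V E" "s' \<noteq> x"
    using ex_neighbour_reachable_avoiding[OF assms(1,2) \<open>v \<in> V - {x}\<close>] by blast
  have "(s, s') \<notin> ?Rx\<^sup>*"
  proof
    assume "(s, s') \<in> ?Rx\<^sup>*"
    then have "(u, v) \<in> ?Rx\<^sup>*"
      using s(1) rtrancl_adj_sym[OF s'(1)] by (meson rtrancl_trans)
    then show False using not_uv by blast
  qed
  then show ?thesis using that s(2,3) s'(2,3) by blast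
qed

lemma binary_extension_if_cut_vertex:
  assumes sg: "simple_graph V E" and "graph_connected V E" "x \<in> V" "V \<noteq> {x}"
    and "\<not> graph_connected (V - {x}) {e\<in>E. x \<notin> e}"
  shows "\<exists>W. binary_extension V E W"
proof -
  obtain s s' where s: "(s, x) \<in> adj V E" "(s', x) \<in> adj V E" "s \<noteq> x" "s' \<noteq> x"
    and not_ss': "(s, s') \<notin> (adj (V - {x}) {e\<in>E. x \<notin> e})\<^sup>*"
    using neighbours_of_cut_vertex[OF assms(2-5)] by blast
  have "binary_extension V E (parity_space V E s x s' x)"
  proof (rule binary_extension_parity_space)
    show "finite E" using sg by (rule simple_graph_finite_edges)
    show "{s, x} \<in> E" "{s', x} \<in> E" using s(1,2) unfolding adj_def by simp_all
    show "s \<notin> {x, s', x}" "s' \<notin> {x, x}" using s(3,4) not_ss' by auto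
    fix vs assume vs: "cycle_list V E vs"
    show "\<not> (s \<in> set vs \<and> s' \<in> set vs) \<and> (x \<noteq> x \<longrightarrow> \<not> (x \<in> set vs \<and> x \<in> set vs))"
      using cycle_connected_avoiding[OF vs _ _ s(3,4)] not_ss' by blast
  qed
  then show ?thesis by blast
qed

theorem corollary2p1:
  fixes V :: "'v set" and E :: "'v set set"
  assumes "simple_graph V E"
    and "no_isolated_vertices V E"
    and "\<nexists>(f :: 'v set \<Rightarrow> 'v set) S Cs.
           binary_matroid S Cs \<and> nontrivial_circuit_injection V E f S Cs"
  shows "two_connected V E"
proof -
  have "finite V" "V \<noteq> {}" using assms(1) unfolding simple_graph_def by auto
  then obtain u w where "{u, w} \<in> E" using ex_neighbour[OF assms(1,2)] by blast
  then have no_extension: "\<nexists>W. binary_extension V E W"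
    using simple_graph_finite_edges[OF assms(1)] circuit_injection_of_binary_extension assms(3)
    by blast
  have "3 \<le> card V"
    using binary_extension_Pow[OF \<open>finite V\<close> _ \<open>{u, w} \<in> E\<close>] no_extension by (meson not_less)
  moreover have "graph_connected V E"
    using binary_extension_if_disconnected[OF assms(1,2)] no_extension by blast
  moreover have "\<forall>x\<in>V. graph_connected (V - {x}) {e\<in>E. x \<notin> e}"
  proof
    fix x assume "x \<in> V"
    have "V \<noteq> {x}" using \<open>3 \<le> card V\<close> by auto
    then show "graph_connected (V - {x}) {e\<in>E. x \<notin> e}"
      using binary_extension_if_cut_vertex[OF assms(1) \<open>graph_connected V E\<close> \<open>x \<in> V\<close>] no_extension
      by blast
  qed
  ultimately show ?thesis unfolding two_connected_def by (intro conjI)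
qed

end
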